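(* There is an absolute constant $C$ (independent of $n$) such that for every $n\ge1$ and every $\varphi\in\mathrm{BMO}(\mathbb{R}^n)$, $$\|\varphi\|_H\le C\sqrt n\,\|\varphi\|_*.$$
   Context: For a ball $B\subset\mathbb{R}^n$, $\langle\varphi\rangle_B=\frac1{|B|}\int_B\varphi$, and $\|\varphi\|_*=\sup_{B}(\langle\varphi^2\rangle_B-\langle\varphi\rangle_B^2)^{1/2}$ over all balls; $\mathrm{BMO}(\mathbb{R}^n)$ is the set of locally integrable real $\varphi$ with $\|\varphi\|_*<\infty$. $H_t(y)=(4\pi t)^{-n/2}e^{-|y|^2/(4t)}$; for $z=(y,t)\in\mathbb{R}^n\times(0,\infty)$, $g(z)=(H_t*g)(y)$, and $\|\varphi\|_H=\sup_{z}(\varphi^2(z)-\varphi(z)^2)^{1/2}$. *)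

theory Defs
  imports "HOL-Analysis.Analysis"
begin

text \<open>R^n is modelled as functions nat => real, extensional on {..<n}, carrying
  the completed product of Lebesgue-Borel measures (= Lebesgue measure on R^n).\<close>

definition RN :: "nat \<Rightarrow> (nat \<Rightarrow> real) measure" where
  "RN n = completion (Pi\<^sub>M {..<n} (\<lambda>_. lborel))"

definition enorm :: "nat \<Rightarrow> (nat \<Rightarrow> real) \<Rightarrow> real" where
  "enorm n x = sqrt (\<Sum>i<n. (x i)\<^sup>2)"

definition eball :: "nat \<Rightarrow> (nat \<Rightarrow> real) \<Rightarrow> real \<Rightarrow> (nat \<Rightarrow> real) set" where
  "eball n c r = {x \<in> space (RN n). enorm n (\<lambda>i. x i - c i) < r}"

definition is_ball :: "nat \<Rightarrow> (nat \<Rightarrow> real) set \<Rightarrow> bool" where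
  "is_ball n B \<longleftrightarrow> (\<exists>c \<in> space (RN n). \<exists>r > 0. B = eball n c r)"

definition avg :: "nat \<Rightarrow> (nat \<Rightarrow> real) set \<Rightarrow> ((nat \<Rightarrow> real) \<Rightarrow> real) \<Rightarrow> real" where
  "avg n B f = (LINT x:B|RN n. f x) / measure (RN n) B"

definition locally_integrable :: "nat \<Rightarrow> ((nat \<Rightarrow> real) \<Rightarrow> real) \<Rightarrow> bool" where
  "locally_integrable n f \<longleftrightarrow>
     f \<in> borel_measurable (RN n) \<and> (\<forall>B. is_ball n B \<longrightarrow> set_integrable (RN n) B f)"

definition bmo_norm :: "nat \<Rightarrow> ((nat \<Rightarrow> real) \<Rightarrow> real) \<Rightarrow> ereal" where
  "bmo_norm n \<phi> = (SUP B \<in> {B. is_ball n B}.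
      ereal (sqrt (avg n B (\<lambda>x. (\<phi> x)\<^sup>2) - (avg n B \<phi>)\<^sup>2)))"

text \<open>phi in BMO: locally integrable with finite BMO norm (finiteness of the
  defining expression presupposes local square integrability, made explicit).\<close>
definition BMO :: "nat \<Rightarrow> ((nat \<Rightarrow> real) \<Rightarrow> real) set" where
  "BMO n = {\<phi>. locally_integrable n \<phi> \<and> locally_integrable n (\<lambda>x. (\<phi> x)\<^sup>2)
                \<and> bmo_norm n \<phi> < \<infinity>}"

definition heat_kernel :: "nat \<Rightarrow> real \<Rightarrow> (nat \<Rightarrow> real) \<Rightarrow> real" where
  "heat_kernel n t y = (4 * pi * t) powr (- real n / 2) * exp (- (enorm n y)\<^sup>2 / (4 * t))"

definition heat_ext :: "nat \<Rightarrow> ((nat \<Rightarrow> real) \<Rightarrow> real) \<Rightarrow> (nat \<Rightarrow> real) \<Rightarrow> real \<Rightarrow> real" where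
  "heat_ext n g y t = (\<integral>x. heat_kernel n t (\<lambda>i. y i - x i) * g x \<partial>RN n)"

definition H_norm :: "nat \<Rightarrow> ((nat \<Rightarrow> real) \<Rightarrow> real) \<Rightarrow> ereal" where
  "H_norm n \<phi> = (SUP z \<in> space (RN n) \<times> {0<..}.
      ereal (sqrt (heat_ext n (\<lambda>x. (\<phi> x)\<^sup>2) (fst z) (snd z) - (heat_ext n \<phi> (fst z) (snd z))\<^sup>2)))"

end

theory Submission
  imports Defs "HOL-Probability.Distributions" "HOL-Real_Asymp.Real_Asymp"
begin

text \<open>
  Writing \<open>exp (-s\<^sup>2/(4t))\<close> as \<open>\<integral>\<^sub>s\<^sup>\<infinity> (r/(2t)) exp (-r\<^sup>2/(4t)) dr\<close> exhibits the heat kernel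
  \<open>H\<^sub>t(y - \<cdot>)\<close> as a superposition \<open>\<integral> \<rho>(r) \<one>\<^bsub>B(y,r)\<^esub>/|B(y,r)| dr\<close> of normalised ball indicators,
  where \<open>\<rho>\<close> is a probability density on radii with \<open>\<integral> \<rho>(r) ln\<^sup>2(r/r\<^sub>0) dr \<le> 1/(2n)\<close> for
  \<open>r\<^sub>0\<^sup>2 = 2t(n + 2)\<close>. So the variance of \<open>\<phi>\<close> under \<open>H\<^sub>t(y - \<cdot>)\<close> is at most the
  \<open>\<rho>\<close>-average of the mean square deviations of \<open>\<phi>\<close> from \<open>\<phi>\<^bsub>B(y,r\<^sub>0)\<^esub>\<close> over the balls \<open>B(y,r)\<close>.
  Averages over concentric balls whose radii differ by a factor \<open>1 + 1/n\<close> differ by at most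
  \<open>2\<parallel>\<phi>\<parallel>\<^sub>*\<close>, because \<open>(1 + 1/n)\<^sup>n \<le> 4\<close>; chaining gives
  \<open>|\<phi>\<^bsub>B(y,r)\<^esub> - \<phi>\<^bsub>B(y,r\<^sub>0)\<^esub>| \<le> 2\<parallel>\<phi>\<parallel>\<^sub>*(2n |ln(r/r\<^sub>0)| + 1)\<close>. Integrating against \<open>\<rho>\<close>
  bounds the variance by \<open>(9 + 16n)\<parallel>\<phi>\<parallel>\<^sub>*\<^sup>2 \<le> 25n\<parallel>\<phi>\<parallel>\<^sub>*\<^sup>2\<close>.
\<close>

section \<open>Lebesgue measure of Euclidean balls\<close>

abbreviation lborel_PiM :: "nat \<Rightarrow> (nat \<Rightarrow> real) measure" where
  "lborel_PiM n \<equiv> Pi\<^sub>M {..<n} (\<lambda>_. lborel)"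

interpretation lborel_product: product_sigma_finite "\<lambda>_::nat. lborel :: real measure"
  by (rule product_sigma_finite.intro) (rule lborel.sigma_finite_measure_axioms)

lemma sigma_finite_lborel_PiM: "sigma_finite_measure (lborel_PiM n)"
  by (rule lborel_product.sigma_finite) simp

lemma space_lborel_PiM: "space (lborel_PiM n) = PiE {..<n} (\<lambda>_. UNIV)"
  by (simp add: space_PiM)

lemma space_RN: "space (RN n) = space (lborel_PiM n)"
  by (simp add: RN_def)

lemma measurable_RN: "f \<in> borel_measurable (lborel_PiM n) \<Longrightarrow> f \<in> borel_measurable (RN n)"
  unfolding RN_def by (rule measurable_completion)

lemma emeasure_RN: "A \<in> sets (lborel_PiM n) \<Longrightarrow> emeasure (RN n) A = emeasure (lborel_PiM n) A"
  unfolding RN_def by (simp add: emeasure_completion main_part_sets)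

lemma nn_integral_RN: "(\<integral>\<^sup>+x. f x \<partial>RN n) = (\<integral>\<^sup>+x. f x \<partial>lborel_PiM n)"
  unfolding RN_def by (rule nn_integral_completion)

lemma enorm_cong: "(\<And>i. i < n \<Longrightarrow> x i = x' i) \<Longrightarrow> enorm n x = enorm n x'"
  unfolding enorm_def by (auto intro!: sum.cong arg_cong[where f=sqrt])

lemma enorm_nonneg: "0 \<le> enorm n x"
  unfolding enorm_def by (auto intro!: sum_nonneg)

lemma enorm_power2: "(enorm n x)\<^sup>2 = (\<Sum>i<n. (x i)\<^sup>2)"
  unfolding enorm_def by (simp add: sum_nonneg)

lemma enorm_scale: "enorm n (\<lambda>i. c * x i) = \<bar>c\<bar> * enorm n x"
proof -
  have "(\<Sum>i<n. (c * x i)\<^sup>2) = c\<^sup>2 * (\<Sum>i<n. (x i)\<^sup>2)"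
    by (simp add: sum_distrib_left power_mult_distrib)
  then show ?thesis unfolding enorm_def by (simp add: real_sqrt_mult)
qed

lemma enorm_diff_commute: "enorm n (\<lambda>i. x i - y i) = enorm n (\<lambda>i. y i - x i)"
  unfolding enorm_def by (simp add: power2_commute)

lemma borel_measurable_enorm_diff[measurable]:
  "(\<lambda>x. enorm n (\<lambda>i. x i - c i)) \<in> borel_measurable (lborel_PiM n)"
proof -
  have [measurable]: "(\<lambda>x. x i) \<in> borel_measurable (lborel_PiM n)" if "i < n" for i
    using that measurable_component_singleton[of i "{..<n}" "\<lambda>_. lborel"] by simp
  have "(\<lambda>x. \<Sum>i<n. (x i - c i)\<^sup>2) \<in> borel_measurable (lborel_PiM n)"
    by (intro borel_measurable_sum) measurable
  then show ?thesis
    unfolding enorm_def by measurable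
qed

lemma eball_eq: "eball n c r = {x \<in> space (lborel_PiM n). enorm n (\<lambda>i. x i - c i) < r}"
  by (simp add: eball_def space_RN)

lemma sets_eball[measurable]: "eball n c r \<in> sets (lborel_PiM n)"
  unfolding eball_eq by measurable

lemma sets_RN_eball[measurable]: "eball n c r \<in> sets (RN n)"
  by (simp add: RN_def)

lemma eball_mono: "r \<le> R \<Longrightarrow> eball n c r \<subseteq> eball n c R"
  unfolding eball_eq by auto

lemma eball_nonpos:
  assumes "r \<le> 0"
  shows "eball n y r = {}"
proof -
  have "\<not> enorm n z < r" for z
    using enorm_nonneg[of n z] assms by linarith
  then show ?thesis by (simp add: eball_def)
qed

lemma lborel_PiM_affine:
  assumes r: "r > 0"
  shows "density (distr (lborel_PiM n) (lborel_PiM n) (\<lambda>x. \<lambda>i\<in>{..<n}. c i + r * x i)) (\<lambda>_. ennreal (r ^ n))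
    = lborel_PiM n" (is "density (distr _ _ ?T) _ = _")
proof (rule lborel_product.PiM_eqI)
  fix A :: "nat \<Rightarrow> real set" assume A: "\<And>i. i \<in> {..<n} \<Longrightarrow> A i \<in> sets lborel"
  have T[measurable]: "?T \<in> lborel_PiM n \<rightarrow>\<^sub>M lborel_PiM n"
    by measurable
  define P where "P i = (\<lambda>x. c i + r * x) -` A i" for i
  have P: "P i \<in> sets lborel" if "i < n" for i
    unfolding P_def using A[of i] that by (auto intro!: measurable_sets_borel[where A="A i"])
  have lborel_A: "emeasure lborel (A i) = ennreal r * emeasure lborel (P i)" if "i < n" for i
  proof -
    have "emeasure lborel (A i)
        = emeasure (density (distr lborel borel (\<lambda>x. c i + r * x)) (\<lambda>_. ennreal \<bar>r\<bar>)) (A i)"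
      using lborel_real_affine[of r "c i"] r by simp
    also have "\<dots> = ennreal r * emeasure (distr lborel borel (\<lambda>x. c i + r * x)) (A i)"
      using A[of i] that r by (subst emeasure_density_const) auto
    also have "\<dots> = ennreal r * emeasure lborel (P i)"
      using A[of i] that by (subst emeasure_distr) (auto simp: P_def)
    finally show ?thesis .
  qed
  have preimage: "?T -` PiE {..<n} A \<inter> space (lborel_PiM n) = PiE {..<n} P"
    by (auto simp: P_def space_lborel_PiM PiE_def Pi_def extensional_def)
  have "emeasure (density (distr (lborel_PiM n) (lborel_PiM n) ?T) (\<lambda>_. ennreal (r ^ n))) (PiE {..<n} A)
      = ennreal (r ^ n) * emeasure (distr (lborel_PiM n) (lborel_PiM n) ?T) (PiE {..<n} A)"
    using A by (subst emeasure_density_const) (auto intro!: sets_PiM_I_finite)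
  also have "\<dots> = ennreal (r ^ n) * emeasure (lborel_PiM n) (PiE {..<n} P)"
    using A by (subst emeasure_distr) (auto intro!: sets_PiM_I_finite simp: preimage)
  also have "\<dots> = ennreal (r ^ n) * (\<Prod>i<n. emeasure lborel (P i))"
    using P by (subst lborel_product.emeasure_PiM) auto
  also have "\<dots> = (\<Prod>i<n. ennreal r * emeasure lborel (P i))"
    using r by (simp add: prod.distrib ennreal_power)
  also have "\<dots> = (\<Prod>i<n. emeasure lborel (A i))"
    using lborel_A by (auto intro!: prod.cong)
  finally show "emeasure (density (distr (lborel_PiM n) (lborel_PiM n) ?T) (\<lambda>_. ennreal (r ^ n))) (PiE {..<n} A)
      = (\<Prod>i\<in>{..<n}. emeasure lborel (A i))" by simp
qed simp_all

lemma emeasure_eball_scale: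
  assumes r: "r > 0"
  shows "emeasure (lborel_PiM n) (eball n c r) = ennreal (r ^ n) * emeasure (lborel_PiM n) (eball n (\<lambda>_. 0) 1)"
proof -
  define T where "T = (\<lambda>x::nat\<Rightarrow>real. \<lambda>i\<in>{..<n}. c i + r * x i)"
  have T[measurable]: "T \<in> lborel_PiM n \<rightarrow>\<^sub>M lborel_PiM n"
    unfolding T_def by measurable
  have "enorm n (\<lambda>i. T x i - c i) = r * enorm n x" for x
  proof -
    have "enorm n (\<lambda>i. T x i - c i) = enorm n (\<lambda>i. r * x i)"
      by (rule enorm_cong) (simp add: T_def)
    then show ?thesis using r by (simp add: enorm_scale)
  qed
  moreover have "T x \<in> space (lborel_PiM n)" for x
    by (simp add: T_def space_lborel_PiM)
  ultimately have preimage_ball: "T -` eball n c r \<inter> space (lborel_PiM n) = eball n (\<lambda>_. 0) 1"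
    using r by (auto simp: eball_eq)
  have "emeasure (lborel_PiM n) (eball n c r)
      = emeasure (density (distr (lborel_PiM n) (lborel_PiM n) T) (\<lambda>_. ennreal (r ^ n))) (eball n c r)"
    unfolding T_def lborel_PiM_affine[OF r] ..
  also have "\<dots> = ennreal (r ^ n) * emeasure (distr (lborel_PiM n) (lborel_PiM n) T) (eball n c r)"
    by (subst emeasure_density_const) auto
  also have "\<dots> = ennreal (r ^ n) * emeasure (lborel_PiM n) (eball n (\<lambda>_. 0) 1)"
    by (subst emeasure_distr) (auto simp: preimage_ball)
  finally show ?thesis .
qed

lemma emeasure_unit_eball_finite: "emeasure (lborel_PiM n) (eball n (\<lambda>_. 0) 1) < \<infinity>"
proof -
  have "eball n (\<lambda>_. 0) 1 \<subseteq> PiE {..<n} (\<lambda>_. {-1..1})"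
  proof
    fix x assume x: "x \<in> eball n (\<lambda>_. 0) 1"
    have "\<bar>x i\<bar> \<le> 1" if i: "i < n" for i
    proof -
      have "(x i)\<^sup>2 \<le> (\<Sum>j<n. (x j)\<^sup>2)"
        using i by (intro member_le_sum) auto
      also have "\<dots> = (enorm n x)\<^sup>2"
        by (simp add: enorm_power2)
      also have "\<dots> \<le> 1"
        using x enorm_nonneg[of n x] by (auto simp: eball_eq intro!: power_le_one)
      finally show ?thesis
        using abs_le_square_iff[of "x i" 1] by simp
    qed
    then show "x \<in> PiE {..<n} (\<lambda>_. {-1..1})"
      using x by (auto simp: eball_eq space_lborel_PiM PiE_def abs_le_iff)
  qed
  then have "emeasure (lborel_PiM n) (eball n (\<lambda>_. 0) 1) \<le> emeasure (lborel_PiM n) (PiE {..<n} (\<lambda>_. {-1..1}))"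
    by (intro emeasure_mono) (auto intro!: sets_PiM_I_finite)
  also have "\<dots> = (\<Prod>i<n. emeasure lborel {-1..1::real})"
    by (subst lborel_product.emeasure_PiM) auto
  also have "\<dots> < \<infinity>"
    by (simp add: prod_constant power_less_top_ennreal)
  finally show ?thesis .
qed

lemma emeasure_unit_eball_pos:
  assumes n: "n \<ge> 1"
  shows "0 < emeasure (lborel_PiM n) (eball n (\<lambda>_. 0) 1)"
proof -
  define e where "e = 1 / (2 * real n)"
  have e: "0 < e" using n by (simp add: e_def)
  have "PiE {..<n} (\<lambda>_. {-e..e}) \<subseteq> eball n (\<lambda>_. 0) 1"
  proof
    fix x assume x: "x \<in> PiE {..<n} (\<lambda>_. {-e..e})"
    have "(\<Sum>j<n. (x j)\<^sup>2) \<le> (\<Sum>j<n. e\<^sup>2)"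
    proof (intro sum_mono)
      fix j assume "j \<in> {..<n}"
      then have "\<bar>x j\<bar> \<le> \<bar>e\<bar>" using x e by (auto simp: PiE_def Pi_def)
      then show "(x j)\<^sup>2 \<le> e\<^sup>2" by (simp add: abs_le_square_iff)
    qed
    also have "\<dots> < 1" using n by (simp add: e_def power2_eq_square field_simps)
    finally have "(enorm n x)\<^sup>2 < 1\<^sup>2" by (simp add: enorm_power2)
    then have "enorm n x < 1"
      by (rule power2_less_imp_less) simp
    then show "x \<in> eball n (\<lambda>_. 0) 1"
      using x by (auto simp: eball_eq space_lborel_PiM PiE_def)
  qed
  then have "emeasure (lborel_PiM n) (PiE {..<n} (\<lambda>_. {-e..e})) \<le> emeasure (lborel_PiM n) (eball n (\<lambda>_. 0) 1)"
    by (intro emeasure_mono) auto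
  moreover have "emeasure (lborel_PiM n) (PiE {..<n} (\<lambda>_. {-e..e})) = (\<Prod>i<n. emeasure lborel {-e..e})"
    by (subst lborel_product.emeasure_PiM) auto
  moreover have "0 < (\<Prod>i<n. emeasure lborel {-e..e})"
    using e by (simp add: prod_constant ennreal_power)
  ultimately show ?thesis by order
qed

definition unit_ball_volume :: "nat \<Rightarrow> real" where
  "unit_ball_volume n = measure (lborel_PiM n) (eball n (\<lambda>_. 0) 1)"

lemma unit_ball_volume_pos: "n \<ge> 1 \<Longrightarrow> 0 < unit_ball_volume n"
  unfolding unit_ball_volume_def measure_def
  by (rule enn2real_positive_iff[THEN iffD2])
    (use emeasure_unit_eball_pos[of n] emeasure_unit_eball_finite[of n] in \<open>auto simp: top_unique\<close>)

lemma unit_ball_volume_nonneg: "0 \<le> unit_ball_volume n"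
  by (simp add: unit_ball_volume_def)

lemma emeasure_eball:
  assumes r: "r > 0"
  shows "emeasure (RN n) (eball n y r) = ennreal (unit_ball_volume n * r ^ n)"
proof -
  have unit: "emeasure (lborel_PiM n) (eball n (\<lambda>_. 0) 1) = ennreal (unit_ball_volume n)"
    unfolding unit_ball_volume_def using emeasure_unit_eball_finite[of n]
    by (intro emeasure_eq_ennreal_measure) simp
  have "emeasure (RN n) (eball n y r) = ennreal (r ^ n) * ennreal (unit_ball_volume n)"
    by (simp only: emeasure_RN[OF sets_eball] emeasure_eball_scale[OF r] unit)
  also have "\<dots> = ennreal (unit_ball_volume n * r ^ n)"
    using ennreal_mult[of "r ^ n" "unit_ball_volume n"] unit_ball_volume_nonneg[of n] r
    by (simp add: mult.commute)
  finally show ?thesis .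
qed

lemma measure_eball: "r > 0 \<Longrightarrow> measure (RN n) (eball n y r) = unit_ball_volume n * r ^ n"
  using emeasure_eball[of r n y] unit_ball_volume_nonneg[of n] by (simp add: measure_def)

section \<open>The heat kernel as a superposition of balls\<close>

lemma heat_kernel_nonneg: "t > 0 \<Longrightarrow> 0 \<le> heat_kernel n t z"
  by (simp add: heat_kernel_def)

lemma borel_measurable_heat_kernel[measurable]:
  "(\<lambda>x. heat_kernel n t (\<lambda>i. y i - x i)) \<in> borel_measurable (lborel_PiM n)"
  unfolding heat_kernel_def enorm_diff_commute[of n y] by measurable

lemma heat_kernel_eq_prod_normal_density:
  assumes t: "t > 0"
  shows "heat_kernel n t (\<lambda>i. y i - x i) = (\<Prod>i<n. normal_density (y i) (sqrt (2 * t)) (x i))"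
proof -
  have pos: "0 < 4 * pi * t" using t by simp
  have "(4 * pi * t) powr (- real n / 2) = ((4 * pi * t) powr (1/2)) powr (- real n)"
    using pos by (simp add: powr_powr)
  also have "\<dots> = (1 / sqrt (4 * pi * t)) ^ n"
    using pos by (simp add: powr_half_sqrt powr_minus powr_realpow power_one_over inverse_eq_divide)
  finally have powr_eq: "(4 * pi * t) powr (- real n / 2) = (1 / sqrt (4 * pi * t)) ^ n" .
  have "(\<Prod>i<n. normal_density (y i) (sqrt (2 * t)) (x i))
      = (\<Prod>i<n. (1 / sqrt (4 * pi * t)) * exp (- (y i - x i)\<^sup>2 / (4 * t)))"
    using t by (intro prod.cong) (auto simp: normal_density_def power2_commute)
  also have "\<dots> = (1 / sqrt (4 * pi * t)) ^ n * exp (\<Sum>i<n. - (y i - x i)\<^sup>2 / (4 * t))"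
    by (simp only: prod.distrib prod_constant exp_sum[OF finite_lessThan] card_lessThan)
  also have "(\<Sum>i<n. - (y i - x i)\<^sup>2 / (4 * t)) = - (enorm n (\<lambda>i. y i - x i))\<^sup>2 / (4 * t)"
    by (simp add: enorm_power2 sum_negf sum_divide_distrib)
  finally show ?thesis
    using powr_eq by (simp add: heat_kernel_def)
qed

lemma nn_integral_heat_kernel:
  assumes t: "t > 0"
  shows "(\<integral>\<^sup>+x. ennreal (heat_kernel n t (\<lambda>i. y i - x i)) \<partial>lborel_PiM n) = 1"
proof -
  have "(\<integral>\<^sup>+x. ennreal (heat_kernel n t (\<lambda>i. y i - x i)) \<partial>lborel_PiM n)
      = (\<integral>\<^sup>+x. (\<Prod>i<n. ennreal (normal_density (y i) (sqrt (2 * t)) (x i))) \<partial>lborel_PiM n)"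
    using t by (intro nn_integral_cong) (simp add: heat_kernel_eq_prod_normal_density prod_ennreal)
  also have "\<dots> = (\<Prod>i<n. \<integral>\<^sup>+x. ennreal (normal_density (y i) (sqrt (2 * t)) x) \<partial>lborel)"
    by (subst lborel_product.product_nn_integral_prod) auto
  also have "\<dots> = 1"
    using t by (subst nn_integral_eq_integral) auto
  finally show ?thesis .
qed

lemma exp_eq_nn_integral_tail:
  assumes t: "t > 0" and \<rho>: "\<rho> \<ge> 0"
  shows "ennreal (exp (- \<rho>\<^sup>2 / (4 * t)))
     = (\<integral>\<^sup>+r. ennreal (r / (2 * t) * exp (- r\<^sup>2 / (4 * t))) * indicator {\<rho><..} r \<partial>lborel)"
proof -
  have "(\<integral>\<^sup>+r. ennreal (r / (2 * t) * exp (- r\<^sup>2 / (4 * t))) * indicator {\<rho><..} r \<partial>lborel)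
     = (\<integral>\<^sup>+r. ennreal (r / (2 * t) * exp (- r\<^sup>2 / (4 * t))) * indicator {\<rho>..} r \<partial>lborel)"
    by (intro nn_integral_cong_AE)
      (use AE_lborel_singleton[of \<rho>] in \<open>auto elim!: eventually_mono split: split_indicator\<close>)
  also have "\<dots> = ennreal (0 - (- exp (- \<rho>\<^sup>2 / (4 * t))))"
  proof (rule nn_integral_FTC_atLeast)
    fix r :: real assume "\<rho> \<le> r"
    then show "0 \<le> r / (2 * t) * exp (- r\<^sup>2 / (4 * t))"
      using \<rho> t by simp
    show "((\<lambda>r. - exp (- r\<^sup>2 / (4 * t))) has_real_derivative r / (2 * t) * exp (- r\<^sup>2 / (4 * t))) (at r)"
      using t by (auto intro!: derivative_eq_intros simp: field_simps power2_eq_square)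
  next
    show "((\<lambda>r. - exp (- r\<^sup>2 / (4 * t))) \<longlongrightarrow> 0) at_top"
      using t by real_asymp
  qed measurable
  finally show ?thesis by simp
qed

definition heat_radial_weight :: "nat \<Rightarrow> real \<Rightarrow> real \<Rightarrow> real" where
  "heat_radial_weight n t r = (4 * pi * t) powr (- real n / 2) * (r / (2 * t) * exp (- r\<^sup>2 / (4 * t)))"

lemma heat_radial_weight_nonneg: "t > 0 \<Longrightarrow> r \<ge> 0 \<Longrightarrow> 0 \<le> heat_radial_weight n t r"
  by (simp add: heat_radial_weight_def)

lemma borel_measurable_heat_radial_weight[measurable]: "heat_radial_weight n t \<in> borel_measurable borel"
  unfolding heat_radial_weight_def by measurable

lemma borel_measurable_indicator_eball[measurable]:
  "(\<lambda>p. indicator (eball n y (snd p)) (fst p) :: ennreal) \<in> borel_measurable (lborel_PiM n \<Otimes>\<^sub>M lborel)"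
proof -
  have "(\<lambda>p. if enorm n (\<lambda>i. fst p i - y i) < snd p then 1 else 0 :: ennreal)
      \<in> borel_measurable (lborel_PiM n \<Otimes>\<^sub>M lborel)"
    by measurable
  then show ?thesis
    by (rule measurable_cong[THEN iffD1, rotated])
       (auto simp: eball_eq space_pair_measure split: split_indicator)
qed

text \<open>Layer-cake decomposition: by \<open>exp_eq_nn_integral_tail\<close>, \<open>H\<^sub>t(y - x)\<close> integrates the weight over
  all radii \<open>r\<close> with \<open>x \<in> B(y,r)\<close>.\<close>
lemma heat_kernel_eq_nn_integral_eball:
  assumes t: "t > 0" and x: "x \<in> space (lborel_PiM n)"
  shows "ennreal (heat_kernel n t (\<lambda>i. y i - x i))
      = (\<integral>\<^sup>+r. ennreal (heat_radial_weight n t r) * indicator (eball n y r) x \<partial>lborel)"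
proof -
  define K where "K = (4 * pi * t) powr (- real n / 2)"
  have K: "0 \<le> K" by (simp add: K_def)
  define \<rho> where "\<rho> = enorm n (\<lambda>i. x i - y i)"
  have \<rho>: "0 \<le> \<rho>" by (simp add: \<rho>_def enorm_nonneg)
  have "ennreal (heat_kernel n t (\<lambda>i. y i - x i)) = ennreal K * ennreal (exp (- \<rho>\<^sup>2 / (4 * t)))"
    using K by (simp add: heat_kernel_def K_def \<rho>_def enorm_diff_commute[of n x y] ennreal_mult)
  also have "\<dots> = ennreal K * (\<integral>\<^sup>+r. ennreal (r / (2 * t) * exp (- r\<^sup>2 / (4 * t))) * indicator {\<rho><..} r \<partial>lborel)"
    using exp_eq_nn_integral_tail[OF t \<rho>] by simp
  also have "\<dots> = (\<integral>\<^sup>+r. ennreal K * (ennreal (r / (2 * t) * exp (- r\<^sup>2 / (4 * t))) * indicator {\<rho><..} r) \<partial>lborel)"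
    by (rule nn_integral_cmult[symmetric]) measurable
  also have "\<dots> = (\<integral>\<^sup>+r. ennreal (heat_radial_weight n t r) * indicator (eball n y r) x \<partial>lborel)"
  proof (rule nn_integral_cong)
    fix r :: real
    have "ennreal K * ennreal (r / (2 * t) * exp (- r\<^sup>2 / (4 * t))) = ennreal (heat_radial_weight n t r)"
      if "\<rho> < r"
      using that \<rho> K t by (simp add: ennreal_mult[symmetric] heat_radial_weight_def K_def)
    then show "ennreal K * (ennreal (r / (2 * t) * exp (- r\<^sup>2 / (4 * t))) * indicator {\<rho><..} r)
        = ennreal (heat_radial_weight n t r) * indicator (eball n y r) x"
      using x by (auto simp: eball_eq \<rho>_def split: split_indicator)
  qed
  finally show ?thesis .
qed

lemma nn_integral_heat_kernel_eball_lborel_PiM: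
  assumes t: "t > 0" and G[measurable]: "G \<in> borel_measurable (lborel_PiM n)"
  shows "(\<integral>\<^sup>+x. ennreal (heat_kernel n t (\<lambda>i. y i - x i)) * G x \<partial>lborel_PiM n)
       = (\<integral>\<^sup>+r. ennreal (heat_radial_weight n t r) * (\<integral>\<^sup>+x. indicator (eball n y r) x * G x \<partial>lborel_PiM n) \<partial>lborel)"
proof -
  have "(\<integral>\<^sup>+x. ennreal (heat_kernel n t (\<lambda>i. y i - x i)) * G x \<partial>lborel_PiM n)
      = (\<integral>\<^sup>+x. (\<integral>\<^sup>+r. ennreal (heat_radial_weight n t r) * indicator (eball n y r) x * G x \<partial>lborel) \<partial>lborel_PiM n)"
  proof (intro nn_integral_cong)
    fix x assume x: "x \<in> space (lborel_PiM n)"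
    have [measurable]: "(\<lambda>r. indicator (eball n y r) x :: ennreal) \<in> borel_measurable lborel"
      using measurable_compose[OF measurable_Pair1'[OF x] borel_measurable_indicator_eball[of n y]] by simp
    show "ennreal (heat_kernel n t (\<lambda>i. y i - x i)) * G x
      = (\<integral>\<^sup>+r. ennreal (heat_radial_weight n t r) * indicator (eball n y r) x * G x \<partial>lborel)"
      unfolding heat_kernel_eq_nn_integral_eball[OF t x] by (rule nn_integral_multc[symmetric]) measurable
  qed
  also have "\<dots> = (\<integral>\<^sup>+r. (\<integral>\<^sup>+x. ennreal (heat_radial_weight n t r) * indicator (eball n y r) x * G x \<partial>lborel_PiM n) \<partial>lborel)"
  proof (rule pair_sigma_finite.Fubini'[symmetric])
    show "pair_sigma_finite (lborel_PiM n) lborel"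
      by (intro pair_sigma_finite.intro sigma_finite_lborel_PiM lborel.sigma_finite_measure_axioms)
    show "(\<lambda>(x, r). ennreal (heat_radial_weight n t r) * indicator (eball n y r) x * G x)
        \<in> borel_measurable (lborel_PiM n \<Otimes>\<^sub>M lborel)"
      by (simp add: case_prod_beta) measurable
  qed
  also have "\<dots> = (\<integral>\<^sup>+r. ennreal (heat_radial_weight n t r) * (\<integral>\<^sup>+x. indicator (eball n y r) x * G x \<partial>lborel_PiM n) \<partial>lborel)"
    by (intro nn_integral_cong) (simp add: nn_integral_cmult[symmetric] mult.assoc)
  finally show ?thesis .
qed

lemma nn_integral_heat_kernel_eball:
  assumes t: "t > 0" and G: "G \<in> borel_measurable (RN n)"
  shows "(\<integral>\<^sup>+x. ennreal (heat_kernel n t (\<lambda>i. y i - x i)) * G x \<partial>RN n)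
       = (\<integral>\<^sup>+r. ennreal (heat_radial_weight n t r) * (\<integral>\<^sup>+x. indicator (eball n y r) x * G x \<partial>RN n) \<partial>lborel)"
proof -
  obtain G' where G': "G' \<in> borel_measurable (lborel_PiM n)" "AE x in lborel_PiM n. G x = G' x"
    using completion_ex_borel_measurable[OF G[unfolded RN_def]] by auto
  have "(\<integral>\<^sup>+x. ennreal (heat_kernel n t (\<lambda>i. y i - x i)) * G x \<partial>RN n)
      = (\<integral>\<^sup>+x. ennreal (heat_kernel n t (\<lambda>i. y i - x i)) * G' x \<partial>lborel_PiM n)"
    unfolding nn_integral_RN by (intro nn_integral_cong_AE) (use G'(2) in auto)
  moreover have "(\<integral>\<^sup>+x. indicator (eball n y r) x * G x \<partial>RN n)
      = (\<integral>\<^sup>+x. indicator (eball n y r) x * G' x \<partial>lborel_PiM n)" for r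
    unfolding nn_integral_RN by (intro nn_integral_cong_AE) (use G'(2) in auto)
  ultimately show ?thesis
    using nn_integral_heat_kernel_eball_lborel_PiM[OF t G'(1)] by simp
qed

text \<open>\<open>heat_radius_density n t r = heat_radial_weight n t r * |B(y,r)|\<close>, so that \<open>H\<^sub>t(y - \<cdot>)\<close> is the
  \<open>heat_radius_density\<close>-average over \<open>r\<close> of the normalised indicators of \<open>B(y,r)\<close>.\<close>
definition heat_radius_density :: "nat \<Rightarrow> real \<Rightarrow> real \<Rightarrow> real" where
  "heat_radius_density n t r = unit_ball_volume n * r ^ n * heat_radial_weight n t r"

lemma heat_radius_density_nonneg: "t > 0 \<Longrightarrow> r \<ge> 0 \<Longrightarrow> 0 \<le> heat_radius_density n t r"
  by (simp add: heat_radius_density_def heat_radial_weight_nonneg unit_ball_volume_nonneg)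

lemma borel_measurable_heat_radius_density[measurable]: "heat_radius_density n t \<in> borel_measurable borel"
  unfolding heat_radius_density_def by measurable

lemma heat_radial_weight_times_emeasure_eball:
  "ennreal (heat_radial_weight n t r) * emeasure (RN n) (eball n y r)
    = ennreal (heat_radius_density n t r) * indicator {0..} r"
proof (cases "0 < r")
  case True
  then have "ennreal (heat_radius_density n t r)
      = ennreal (unit_ball_volume n * r ^ n) * ennreal (heat_radial_weight n t r)"
    unfolding heat_radius_density_def by (intro ennreal_mult') (simp add: unit_ball_volume_nonneg)
  then show ?thesis
    using True by (simp add: emeasure_eball mult.commute)
next
  case False
  then have "eball n y r = {}" and "r = 0 \<or> indicator {0..} r = (0 :: ennreal)"
    by (auto simp: eball_nonpos split: split_indicator)
  then show ?thesis
    by (auto simp: heat_radius_density_def heat_radial_weight_def)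
qed

lemma nn_integral_heat_radius_density:
  assumes t: "t > 0"
  shows "(\<integral>\<^sup>+r. ennreal (heat_radius_density n t r) * indicator {0..} r \<partial>lborel) = 1"
proof -
  let ?y = "\<lambda>_. 0 :: real"
  have "1 = (\<integral>\<^sup>+x. ennreal (heat_kernel n t (\<lambda>i. ?y i - x i)) * 1 \<partial>RN n)"
    using nn_integral_heat_kernel[OF t, of n ?y] by (simp add: nn_integral_RN)
  also have "\<dots> = (\<integral>\<^sup>+r. ennreal (heat_radial_weight n t r) * (\<integral>\<^sup>+x. indicator (eball n ?y r) x * 1 \<partial>RN n) \<partial>lborel)"
    by (rule nn_integral_heat_kernel_eball[OF t]) simp
  also have "\<dots> = (\<integral>\<^sup>+r. ennreal (heat_radial_weight n t r) * emeasure (RN n) (eball n ?y r) \<partial>lborel)"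
    by simp
  also have "\<dots> = (\<integral>\<^sup>+r. ennreal (heat_radius_density n t r) * indicator {0..} r \<partial>lborel)"
    by (simp only: heat_radial_weight_times_emeasure_eball)
  finally show ?thesis ..
qed

section \<open>A logarithmic moment of the radial density\<close>

lemma two_ln_le_diff_inverse:
  fixes s :: real
  assumes s: "1 \<le> s"
  shows "2 * ln s \<le> s - 1 / s"
proof -
  let ?g = "\<lambda>x::real. x - 1 / x - 2 * ln x"
  have "?g 1 \<le> ?g s"
  proof (rule DERIV_nonneg_imp_nondecreasing[OF s])
    fix x :: real assume x: "1 \<le> x" "x \<le> s"
    have "(?g has_real_derivative (1 + 1 / x\<^sup>2 - 2 / x)) (at x)"
      using x by (auto intro!: derivative_eq_intros simp: power2_eq_square field_simps)
    moreover have "1 + 1 / x\<^sup>2 - 2 / x = (1 - 1 / x)\<^sup>2"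
      using x by (simp add: power2_eq_square field_simps)
    ultimately show "\<exists>y. (?g has_real_derivative y) (at x) \<and> 0 \<le> y"
      by (metis zero_le_power2)
  qed
  then show ?thesis by simp
qed

lemma ln_squared_le:
  fixes s :: real
  assumes s: "0 < s"
  shows "(ln s)\<^sup>2 \<le> (s - 1 / s)\<^sup>2 / 4"
proof (cases "1 \<le> s")
  case True
  have "(2 * ln s)\<^sup>2 \<le> (s - 1 / s)\<^sup>2"
    using True two_ln_le_diff_inverse[OF True] by (intro power_mono) auto
  then show ?thesis by (simp add: power_mult_distrib)
next
  case False
  then have s': "1 \<le> 1 / s" using s by simp
  have "(2 * ln (1 / s))\<^sup>2 \<le> (1 / s - s)\<^sup>2"
    using s' two_ln_le_diff_inverse[OF s'] by (intro power_mono) auto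
  moreover have "ln (1 / s) = - ln s"
    using s by (simp add: ln_div)
  ultimately show ?thesis
    by (simp add: power_mult_distrib power2_commute)
qed

lemma nn_integral_atLeast_le_of_Icc:
  fixes f :: "real \<Rightarrow> ennreal"
  assumes [measurable]: "f \<in> borel_measurable borel"
    and bound: "\<And>b. b0 \<le> b \<Longrightarrow> (\<integral>\<^sup>+r. f r * indicator {a..b} r \<partial>lborel) \<le> C"
  shows "(\<integral>\<^sup>+r. f r * indicator {a..} r \<partial>lborel) \<le> C"
proof -
  have "(SUP k. f r * indicator {a..b0 + real k} r) = f r * indicator {a..} r" for r
  proof (rule LIMSEQ_unique[OF LIMSEQ_SUP])
    obtain k where k: "r - b0 < real k"
      using reals_Archimedean2 ..
    have "\<forall>\<^sub>F k' in sequentially. r \<le> b0 + real k'"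
      using k by (intro eventually_sequentiallyI[where c=k]) auto
    then have "\<forall>\<^sub>F k in sequentially. f r * indicator {a..b0 + real k} r = f r * indicator {a..} r"
      by eventually_elim (simp split: split_indicator)
    then show "(\<lambda>k. f r * indicator {a..b0 + real k} r) \<longlonglongrightarrow> f r * indicator {a..} r"
      by (rule tendsto_eventually)
  qed (auto simp: incseq_def split: split_indicator)
  then have "(\<integral>\<^sup>+r. f r * indicator {a..} r \<partial>lborel)
      = (\<integral>\<^sup>+r. (SUP k. f r * indicator {a..b0 + real k} r) \<partial>lborel)"
    by simp
  also have "\<dots> = (SUP k. \<integral>\<^sup>+r. f r * indicator {a..b0 + real k} r \<partial>lborel)"
    by (rule nn_integral_monotone_convergence_SUP)
      (auto simp: incseq_def le_fun_def split: split_indicator)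
  also have "\<dots> \<le> C"
    by (intro SUP_least bound) simp
  finally show ?thesis .
qed

lemma nn_integral_le_of_antiderivative:
  fixes f g \<Phi> :: "real \<Rightarrow> real"
  assumes [measurable]: "f \<in> borel_measurable borel"
    and f_nonneg: "\<And>r. 0 \<le> r \<Longrightarrow> 0 \<le> f r" and g_nonneg: "\<And>r. 0 \<le> r \<Longrightarrow> 0 \<le> g r"
    and g_cont: "\<And>S. continuous_on S g"
    and \<Phi>': "\<And>r. (\<Phi> has_real_derivative f r - g r) (at r)"
    and \<Phi>0: "\<Phi> 0 = 0" and eventually_nonpos: "\<forall>\<^sub>F b in at_top. \<Phi> b \<le> 0"
  shows "(\<integral>\<^sup>+r. ennreal (f r) * indicator {0..} r \<partial>lborel)
      \<le> (\<integral>\<^sup>+r. ennreal (g r) * indicator {0..} r \<partial>lborel)"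
proof -
  obtain b0 where b0: "\<And>b. b0 \<le> b \<Longrightarrow> \<Phi> b \<le> 0" and "0 \<le> b0"
    using eventually_nonpos unfolding eventually_at_top_linorder by (metis max.cobounded1 max.cobounded2 order_trans)
  have [measurable]: "g \<in> borel_measurable borel"
    using g_cont by (intro borel_measurable_continuous_onI)
  show ?thesis
  proof (rule nn_integral_atLeast_le_of_Icc[of _ b0])
    fix b assume b: "b0 \<le> b"
    then have "0 \<le> b" using \<open>0 \<le> b0\<close> by simp
    have g_int: "(g has_integral integral {0..b} g) {0..b}"
      using g_cont by (intro integrable_integral integrable_continuous_interval)
    have "((\<lambda>r. f r - g r) has_integral (\<Phi> b - \<Phi> 0)) {0..b}"
      using \<open>0 \<le> b\<close> \<Phi>' by (intro fundamental_theorem_of_calculus)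
        (auto simp: has_real_derivative_iff_has_vector_derivative[symmetric] intro: has_field_derivative_at_within)
    from has_integral_add[OF this g_int]
    have f_int: "(f has_integral (integral {0..b} g + \<Phi> b)) {0..b}"
      using \<Phi>0 by (simp add: algebra_simps)
    have "(\<integral>\<^sup>+r. ennreal (f r) * indicator {0..b} r \<partial>lborel) = (\<integral>\<^sup>+r. ennreal (indicator {0..b} r * f r) \<partial>lborel)"
      by (intro nn_integral_cong) (simp split: split_indicator)
    also have "\<dots> = ennreal (integral {0..b} g + \<Phi> b)"
      by (rule nn_integral_has_integral_lebesgue[OF _ f_int]) (use f_nonneg in auto)
    also have "\<dots> \<le> ennreal (integral {0..b} g)"
      using b0[OF b] by (intro ennreal_leI) simp
    also have "\<dots> = (\<integral>\<^sup>+r. ennreal (indicator {0..b} r * g r) \<partial>lborel)"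
      by (rule nn_integral_has_integral_lebesgue[OF _ g_int, symmetric]) (use g_nonneg in auto)
    also have "\<dots> \<le> (\<integral>\<^sup>+r. ennreal (g r) * indicator {0..} r \<partial>lborel)"
      by (intro nn_integral_mono) (auto split: split_indicator)
    finally show "(\<integral>\<^sup>+r. ennreal (f r) * indicator {0..b} r \<partial>lborel)
        \<le> (\<integral>\<^sup>+r. ennreal (g r) * indicator {0..} r \<partial>lborel)" .
  qed measurable
qed

lemma gaussian_moment_antiderivative:
  fixes m :: nat and t a r :: real
  assumes t: "t > 0" and a: "a = 2 * t * (real m + 3)"
  shows "((\<lambda>r. exp (- r\<^sup>2 / (4 * t)) * (- (r ^ (m + 3)) / (real m + 3) + a / (real m + 1) * r ^ (m + 1)))
     has_real_derivative
     exp (- r\<^sup>2 / (4 * t)) * (r ^ (m + 4) / a - 2 * r ^ (m + 2) + a * r ^ m)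
       - 2 / (real m + 1) * (r ^ (m + 2) * exp (- r\<^sup>2 / (4 * t)))) (at r)"
proof -
  have exp': "((\<lambda>r. exp (- r\<^sup>2 / (4 * t))) has_real_derivative exp (- r\<^sup>2 / (4 * t)) * (- (r / (2 * t)))) (at r)"
    using t by (auto intro!: derivative_eq_intros simp: field_simps power2_eq_square)
  have "((\<lambda>r. r ^ (m + 3)) has_real_derivative real (m + 3) * r ^ (m + 2)) (at r)"
    using DERIV_pow[of "m + 3" r] by simp
  moreover have "((\<lambda>r. r ^ (m + 1)) has_real_derivative real (m + 1) * r ^ m) (at r)"
    using DERIV_pow[of "m + 1" r] by simp
  ultimately have "((\<lambda>r. - (r ^ (m + 3)) / (real m + 3) + a / (real m + 1) * r ^ (m + 1)) has_real_derivative
      - (real (m + 3) * r ^ (m + 2)) / (real m + 3) + a / (real m + 1) * (real (m + 1) * r ^ m)) (at r)"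
    by (intro DERIV_add DERIV_cmult DERIV_minus DERIV_cdivide)
  then have poly': "((\<lambda>r. - (r ^ (m + 3)) / (real m + 3) + a / (real m + 1) * r ^ (m + 1)) has_real_derivative
      - (r ^ (m + 2)) + a * r ^ m) (at r)"
    by (simp add: add.commute)
  have m: "real m + 1 \<noteq> 0" "real m + 3 \<noteq> 0" by linarith+
  have "a > 0" using t unfolding a by simp
  have ratio: "r / (2 * t) = (real m + 3) * r / a"
    unfolding a using m by simp
  have "- (r / (2 * t)) * (- (r ^ (m + 3)) / (real m + 3) + a / (real m + 1) * r ^ (m + 1))
      + (- (r ^ (m + 2)) + a * r ^ m)
    = (r ^ (m + 4) / a - 2 * r ^ (m + 2) + a * r ^ m) - 2 / (real m + 1) * r ^ (m + 2)"
    unfolding ratio power_add using \<open>a > 0\<close> m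
    by (simp add: divide_simps) (simp add: algebra_simps eval_nat_numeral)
  then have "exp (- r\<^sup>2 / (4 * t)) * (- (r / (2 * t)) * (- (r ^ (m + 3)) / (real m + 3) + a / (real m + 1) * r ^ (m + 1))
      + (- (r ^ (m + 2)) + a * r ^ m))
    = exp (- r\<^sup>2 / (4 * t)) * ((r ^ (m + 4) / a - 2 * r ^ (m + 2) + a * r ^ m) - 2 / (real m + 1) * r ^ (m + 2))"
    by simp
  then have "exp (- r\<^sup>2 / (4 * t)) * - (r / (2 * t)) * (- (r ^ (m + 3)) / (real m + 3) + a / (real m + 1) * r ^ (m + 1))
      + (- (r ^ (m + 2)) + a * r ^ m) * exp (- r\<^sup>2 / (4 * t))
    = exp (- r\<^sup>2 / (4 * t)) * (r ^ (m + 4) / a - 2 * r ^ (m + 2) + a * r ^ m)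
      - 2 / (real m + 1) * (r ^ (m + 2) * exp (- r\<^sup>2 / (4 * t)))"
    by (simp add: algebra_simps)
  with DERIV_mult[OF exp' poly'] show ?thesis by simp
qed

text \<open>The integrand is \<open>p(r) (r/\<surd>a - \<surd>a/r)\<^sup>2\<close> for \<open>p(r) = r\<^bsup>m+2\<^esup> exp (-r\<^sup>2/(4t))\<close>, and
  \<open>a = 2t(m + 3)\<close> is the mean of \<open>r\<^sup>2\<close> under the weight \<open>p\<close>.\<close>
lemma nn_integral_gaussian_quadratic_moment_le:
  fixes m :: nat and t :: real
  assumes t: "t > 0"
  defines "a \<equiv> 2 * t * (real m + 3)"
  shows "(\<integral>\<^sup>+r. ennreal (exp (- r\<^sup>2 / (4 * t)) * (r ^ (m + 4) / a - 2 * r ^ (m + 2) + a * r ^ m))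
        * indicator {0..} r \<partial>lborel)
     \<le> (\<integral>\<^sup>+r. ennreal (2 / (real m + 1) * (r ^ (m + 2) * exp (- r\<^sup>2 / (4 * t)))) * indicator {0..} r \<partial>lborel)"
proof -
  have a: "0 < a" using t by (simp add: a_def)
  define \<Phi> where "\<Phi> r = exp (- r\<^sup>2 / (4 * t)) * (- (r ^ (m + 3)) / (real m + 3) + a / (real m + 1) * r ^ (m + 1))"
    for r
  have \<Phi>_eventually_nonpos: "\<forall>\<^sub>F b in at_top. \<Phi> b \<le> 0"
  proof -
    have "filterlim (\<lambda>b::real. b\<^sup>2) at_top at_top" by real_asymp
    then have "\<forall>\<^sub>F b in at_top. a * (real m + 3) / (real m + 1) \<le> b\<^sup>2"
      unfolding filterlim_at_top by blast
    with eventually_ge_at_top[of 0] show ?thesis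
    proof eventually_elim
      case (elim b)
      then have "a / (real m + 1) \<le> b\<^sup>2 / (real m + 3)"
        by (simp add: field_simps)
      then have "a / (real m + 1) - b\<^sup>2 / (real m + 3) \<le> 0"
        by simp
      moreover have "\<Phi> b = exp (- b\<^sup>2 / (4 * t)) * b ^ (m + 1) * (a / (real m + 1) - b\<^sup>2 / (real m + 3))"
        by (simp add: \<Phi>_def power_add power2_eq_square power3_eq_cube field_simps)
      ultimately show ?case
        using elim by (simp add: mult_nonneg_nonpos)
    qed
  qed
  show ?thesis
  proof (rule nn_integral_le_of_antiderivative[where \<Phi>=\<Phi>])
    show "0 \<le> exp (- r\<^sup>2 / (4 * t)) * (r ^ (m + 4) / a - 2 * r ^ (m + 2) + a * r ^ m)" if "0 \<le> r" for r
    proof -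
      have "r ^ (m + 4) / a - 2 * r ^ (m + 2) + a * r ^ m = r ^ m * ((r\<^sup>2 - a)\<^sup>2 / a)"
        using a by (simp add: power_add field_simps power2_eq_square power4_eq_xxxx)
      then show ?thesis
        using that a by simp
    qed
    show "(\<Phi> has_real_derivative exp (- r\<^sup>2 / (4 * t)) * (r ^ (m + 4) / a - 2 * r ^ (m + 2) + a * r ^ m)
        - 2 / (real m + 1) * (r ^ (m + 2) * exp (- r\<^sup>2 / (4 * t)))) (at r)" for r
      unfolding \<Phi>_def[abs_def] by (rule gaussian_moment_antiderivative[OF t a_def[THEN meta_eq_to_obj_eq]])
    show "continuous_on S (\<lambda>r. 2 / (real m + 1) * (r ^ (m + 2) * exp (- r\<^sup>2 / (4 * t))))" for S
      using t by (intro continuous_intros) auto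
  qed (use \<Phi>_eventually_nonpos in \<open>auto simp: \<Phi>_def\<close>)
qed

lemma nn_integral_gaussian_log_moment_le:
  fixes m :: nat and t :: real
  assumes t: "t > 0"
  defines "a \<equiv> 2 * t * (real m + 3)"
  shows "(\<integral>\<^sup>+r. ennreal (r ^ (m + 2) * exp (- r\<^sup>2 / (4 * t)) * (ln (r / sqrt a))\<^sup>2) * indicator {0..} r \<partial>lborel)
     \<le> ennreal (1 / (2 * (real m + 1)))
        * (\<integral>\<^sup>+r. ennreal (r ^ (m + 2) * exp (- r\<^sup>2 / (4 * t))) * indicator {0..} r \<partial>lborel)"
proof -
  have a: "0 < a" using t by (simp add: a_def)
  define p where "p r = r ^ (m + 2) * exp (- r\<^sup>2 / (4 * t))" for r
  define f where "f r = exp (- r\<^sup>2 / (4 * t)) * (r ^ (m + 4) / a - 2 * r ^ (m + 2) + a * r ^ m)" for r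
  define c where "c = 2 / (real m + 1)"
  have c: "0 \<le> c" by (simp add: c_def)
  have [measurable]: "p \<in> borel_measurable borel" "f \<in> borel_measurable borel"
    unfolding p_def f_def by measurable
  have pointwise: "ennreal (p r * (ln (r / sqrt a))\<^sup>2) * indicator {0..} r
      \<le> ennreal (1/4) * (ennreal (f r) * indicator {0..} r)" for r
  proof (cases "0 < r")
    case True
    have "(ln (r / sqrt a))\<^sup>2 \<le> (r / sqrt a - 1 / (r / sqrt a))\<^sup>2 / 4"
      using True a by (intro ln_squared_le) simp
    also have "(r / sqrt a - 1 / (r / sqrt a))\<^sup>2 = r\<^sup>2 / a - 2 + a / r\<^sup>2"
      using True a by (simp add: power2_eq_square field_simps)
    finally have "p r * (ln (r / sqrt a))\<^sup>2 \<le> p r * ((r\<^sup>2 / a - 2 + a / r\<^sup>2) / 4)"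
      using True by (intro mult_left_mono) (auto simp: p_def)
    also have "\<dots> = 1/4 * f r"
      using True a by (simp add: p_def f_def power_add power2_eq_square power4_eq_xxxx field_simps)
    finally show ?thesis
      using True by (simp add: ennreal_mult'[symmetric] ennreal_leI)
  qed (auto simp: p_def split: split_indicator)
  have "(\<integral>\<^sup>+r. ennreal (p r * (ln (r / sqrt a))\<^sup>2) * indicator {0..} r \<partial>lborel)
      \<le> (\<integral>\<^sup>+r. ennreal (1/4) * (ennreal (f r) * indicator {0..} r) \<partial>lborel)"
    by (intro nn_integral_mono pointwise)
  also have "\<dots> = ennreal (1/4) * (\<integral>\<^sup>+r. ennreal (f r) * indicator {0..} r \<partial>lborel)"
    by (rule nn_integral_cmult) measurable
  also have "\<dots> \<le> ennreal (1/4) * (\<integral>\<^sup>+r. ennreal (c * p r) * indicator {0..} r \<partial>lborel)"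
    using nn_integral_gaussian_quadratic_moment_le[OF t, of m]
    by (intro mult_left_mono) (simp_all add: f_def p_def c_def a_def)
  also have "(\<integral>\<^sup>+r. ennreal (c * p r) * indicator {0..} r \<partial>lborel)
      = ennreal c * (\<integral>\<^sup>+r. ennreal (p r) * indicator {0..} r \<partial>lborel)"
    by (subst nn_integral_cmult[symmetric]) (auto simp: c ennreal_mult' mult.assoc)
  also have "ennreal (1/4) * (ennreal c * (\<integral>\<^sup>+r. ennreal (p r) * indicator {0..} r \<partial>lborel))
      = ennreal (1 / (2 * (real m + 1))) * (\<integral>\<^sup>+r. ennreal (p r) * indicator {0..} r \<partial>lborel)"
    by (simp add: c_def mult.assoc[symmetric] ennreal_mult'[symmetric])
  finally show ?thesis
    by (simp add: p_def)
qed

lemma nn_integral_heat_radius_density_log_moment: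
  assumes n: "n \<ge> 1" and t: "t > 0"
  shows "(\<integral>\<^sup>+r. ennreal (heat_radius_density n t r * (ln (r / sqrt (2 * t * (real n + 2))))\<^sup>2)
      * indicator {0..} r \<partial>lborel) \<le> ennreal (1 / (2 * real n))"
proof -
  obtain m where m: "n = Suc m" using n by (cases n) auto
  define K where "K = unit_ball_volume n * (4 * pi * t) powr (- real n / 2) / (2 * t)"
  have K: "0 \<le> K" using t by (simp add: K_def unit_ball_volume_nonneg)
  define p where "p r = r ^ (m + 2) * exp (- r\<^sup>2 / (4 * t))" for r
  have [measurable]: "p \<in> borel_measurable borel" unfolding p_def by measurable
  have density_eq: "heat_radius_density n t r = K * p r" for r
    by (simp add: heat_radius_density_def heat_radial_weight_def K_def p_def m field_simps)
  define L where "L r = (ln (r / sqrt (2 * t * (real n + 2))))\<^sup>2" for r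
  have [measurable]: "L \<in> borel_measurable borel" unfolding L_def by measurable
  have scale: "(\<integral>\<^sup>+r. ennreal (heat_radius_density n t r * g r) * indicator {0..} r \<partial>lborel)
      = ennreal K * (\<integral>\<^sup>+r. ennreal (p r * g r) * indicator {0..} r \<partial>lborel)"
    if [measurable]: "g \<in> borel_measurable borel" for g
    by (subst nn_integral_cmult[symmetric]) (auto simp: density_eq K ennreal_mult' mult.assoc)
  have total: "ennreal K * (\<integral>\<^sup>+r. ennreal (p r) * indicator {0..} r \<partial>lborel) = 1"
    using scale[of "\<lambda>_. 1"] nn_integral_heat_radius_density[OF t] by simp
  have "(\<integral>\<^sup>+r. ennreal (heat_radius_density n t r * L r) * indicator {0..} r \<partial>lborel)
      = ennreal K * (\<integral>\<^sup>+r. ennreal (p r * L r) * indicator {0..} r \<partial>lborel)"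
    by (rule scale) measurable
  also have "\<dots> \<le> ennreal K * (ennreal (1 / (2 * real n)) * (\<integral>\<^sup>+r. ennreal (p r) * indicator {0..} r \<partial>lborel))"
    using nn_integral_gaussian_log_moment_le[OF t, of m]
    by (intro mult_left_mono) (simp_all add: p_def L_def m add_ac)
  also have "\<dots> = ennreal (1 / (2 * real n))"
    using total by (metis mult.left_commute mult.right_neutral)
  finally show ?thesis
    by (simp add: L_def)
qed

lemma nn_integral_heat_radius_density_log_affine_le:
  assumes n: "n \<ge> 1" and t: "t > 0" and a: "0 \<le> a" and b: "0 \<le> b"
  shows "(\<integral>\<^sup>+r. ennreal (heat_radius_density n t r * (a + b * (ln (r / sqrt (2 * t * (real n + 2))))\<^sup>2))
      * indicator {0..} r \<partial>lborel) \<le> ennreal (a + b / (2 * real n))"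
proof -
  define L where "L r = (ln (r / sqrt (2 * t * (real n + 2))))\<^sup>2" for r
  have [measurable]: "L \<in> borel_measurable borel" unfolding L_def by measurable
  have split: "ennreal (heat_radius_density n t r * (a + b * L r)) * indicator {0..} r
      = ennreal a * (ennreal (heat_radius_density n t r) * indicator {0..} r)
        + ennreal b * (ennreal (heat_radius_density n t r * L r) * indicator {0..} r)" for r
  proof (cases "0 \<le> r")
    case True
    then have "0 \<le> heat_radius_density n t r" by (rule heat_radius_density_nonneg[OF t])
    then show ?thesis
      using a b by (simp add: distrib_left ennreal_plus ennreal_mult mult_ac L_def)
  qed simp
  have "(\<integral>\<^sup>+r. ennreal (heat_radius_density n t r * (a + b * L r)) * indicator {0..} r \<partial>lborel)
      = ennreal a * (\<integral>\<^sup>+r. ennreal (heat_radius_density n t r) * indicator {0..} r \<partial>lborel)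
        + ennreal b * (\<integral>\<^sup>+r. ennreal (heat_radius_density n t r * L r) * indicator {0..} r \<partial>lborel)"
    unfolding split by (subst nn_integral_add) (auto simp: nn_integral_cmult)
  also have "\<dots> \<le> ennreal a * 1 + ennreal b * ennreal (1 / (2 * real n))"
    using nn_integral_heat_radius_density_log_moment[OF n t]
    by (intro add_mono mult_left_mono) (simp_all add: nn_integral_heat_radius_density[OF t] L_def)
  also have "\<dots> = ennreal (a + b * (1 / (2 * real n)))"
    unfolding mult_1_right ennreal_mult'[OF b, symmetric] by (rule ennreal_plus[symmetric]) (use a b in auto)
  finally show ?thesis
    by (simp add: L_def)
qed

section \<open>Averages of a BMO function over concentric balls\<close>

lemma set_integral_square_deviation:
  fixes f :: "'a \<Rightarrow> real"
  assumes S: "S \<in> sets M" "emeasure M S < \<infinity>"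
    and f: "set_integrable M S f" and f2: "set_integrable M S (\<lambda>x. (f x)\<^sup>2)"
  shows "set_integrable M S (\<lambda>x. (f x - c)\<^sup>2)"
    and "(LINT x:S|M. (f x - c)\<^sup>2) = (LINT x:S|M. (f x)\<^sup>2) - 2 * c * (LINT x:S|M. f x) + c\<^sup>2 * measure M S"
proof -
  have one: "set_integrable M S (\<lambda>_. 1 :: real)"
    using S unfolding set_integrable_def by (simp add: integrable_indicator_iff sets.Int_space_eq2)
  have expand: "(\<lambda>x. (f x - c)\<^sup>2) = (\<lambda>x. ((f x)\<^sup>2 - 2 * c * f x) + c\<^sup>2 * 1)"
    by (simp add: power2_eq_square algebra_simps)
  have i1: "set_integrable M S (\<lambda>x. 2 * c * f x)"
    by (intro set_integrable_mult_right f)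
  have i2: "set_integrable M S (\<lambda>x. (f x)\<^sup>2 - 2 * c * f x)"
    by (intro set_integral_diff(1) f2 i1)
  have i3: "set_integrable M S (\<lambda>x. c\<^sup>2 * 1)"
    by (intro set_integrable_mult_right one)
  show "set_integrable M S (\<lambda>x. (f x - c)\<^sup>2)"
    unfolding expand by (intro set_integral_add(1) i2 i3)
  have "emeasure M S \<noteq> \<infinity>"
    using S by simp
  then show "(LINT x:S|M. (f x - c)\<^sup>2) = (LINT x:S|M. (f x)\<^sup>2) - 2 * c * (LINT x:S|M. f x) + c\<^sup>2 * measure M S"
    unfolding expand set_integral_add(2)[OF i2 i3] set_integral_diff(2)[OF f2 i1]
    using S by (simp add: set_integral_const)
qed

lemma one_plus_inverse_power_le_exp_1: "(1 + 1 / real n) ^ n \<le> exp 1"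
proof (cases "n = 0")
  case False
  have "(1 + 1 / real n) ^ n \<le> exp (1 / real n) ^ n"
    by (intro power_mono) (auto simp: exp_ge_add_one_self add_nonneg_nonneg)
  also have "\<dots> = exp 1"
    using False by (simp add: exp_of_nat_mult[symmetric])
  finally show ?thesis .
qed simp

lemma exp_inverse_Suc_le:
  assumes n: "n \<ge> 1"
  shows "exp (1 / (real n + 1)) \<le> 1 + 1 / real n"
proof -
  have "real n / (real n + 1) \<le> exp (- (1 / (real n + 1)))"
    using exp_ge_add_one_self[of "- (1 / (real n + 1))"] by (simp add: field_simps)
  then have "1 / exp (- (1 / (real n + 1))) \<le> 1 / (real n / (real n + 1))"
    using n by (intro divide_left_mono) auto
  then show ?thesis
    using n by (simp add: exp_minus field_simps)
qed

locale bmo_function =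
  fixes n :: nat and \<phi> :: "(nat \<Rightarrow> real) \<Rightarrow> real"
  assumes dim_ge_1: "n \<ge> 1" and in_BMO: "\<phi> \<in> BMO n"
begin

definition bmo :: real where
  "bmo = real_of_ereal (bmo_norm n \<phi>)"

definition ball_variance :: "(nat \<Rightarrow> real) set \<Rightarrow> real" where
  "ball_variance B = avg n B (\<lambda>x. (\<phi> x)\<^sup>2) - (avg n B \<phi>)\<^sup>2"

abbreviation ball_avg :: "(nat \<Rightarrow> real) \<Rightarrow> real \<Rightarrow> real" where
  "ball_avg y r \<equiv> avg n (eball n y r) \<phi>"

lemma borel_measurable_phi[measurable]: "\<phi> \<in> borel_measurable (RN n)"
  using in_BMO by (simp add: BMO_def locally_integrable_def)

lemma set_integrable_ball:
  assumes "is_ball n B"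
  shows "set_integrable (RN n) B \<phi>" and "set_integrable (RN n) B (\<lambda>x. (\<phi> x)\<^sup>2)"
  using in_BMO assms by (simp_all add: BMO_def locally_integrable_def)

lemma is_ball_eball: "y \<in> space (RN n) \<Longrightarrow> r > 0 \<Longrightarrow> is_ball n (eball n y r)"
  by (auto simp: is_ball_def)

lemma
  assumes "is_ball n B"
  shows sets_ball: "B \<in> sets (RN n)"
    and emeasure_ball_finite: "emeasure (RN n) B < \<infinity>"
    and measure_ball_pos: "0 < measure (RN n) B"
  using assms unit_ball_volume_pos[OF dim_ge_1]
  by (auto simp: is_ball_def emeasure_eball measure_eball)

lemma set_integral_ball_square_deviation:
  assumes B: "is_ball n B"
  shows "set_integrable (RN n) B (\<lambda>x. (\<phi> x - c)\<^sup>2)"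
    and "(LINT x:B|RN n. (\<phi> x - c)\<^sup>2) = measure (RN n) B * (ball_variance B + (avg n B \<phi> - c)\<^sup>2)"
proof -
  note deviation = set_integral_square_deviation[OF sets_ball[OF B] emeasure_ball_finite[OF B]
      set_integrable_ball[OF B], of c]
  show "set_integrable (RN n) B (\<lambda>x. (\<phi> x - c)\<^sup>2)"
    by (rule deviation(1))
  define V where "V = measure (RN n) B"
  have V: "0 < V" using measure_ball_pos[OF B] by (simp add: V_def)
  define I1 where "I1 = (LINT x:B|RN n. \<phi> x)"
  define I2 where "I2 = (LINT x:B|RN n. (\<phi> x)\<^sup>2)"
  have avg1: "avg n B \<phi> = I1 / V" and avg2: "avg n B (\<lambda>x. (\<phi> x)\<^sup>2) = I2 / V"
    by (simp_all add: avg_def I1_def I2_def V_def)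
  have "(LINT x:B|RN n. (\<phi> x - c)\<^sup>2) = I2 - 2 * c * I1 + c\<^sup>2 * V"
    using deviation(2) by (simp add: I1_def I2_def V_def)
  also have "\<dots> = V * (ball_variance B + (avg n B \<phi> - c)\<^sup>2)"
    unfolding ball_variance_def avg1 avg2 using V by (simp add: field_simps power2_eq_square)
  finally show "(LINT x:B|RN n. (\<phi> x - c)\<^sup>2) = measure (RN n) B * (ball_variance B + (avg n B \<phi> - c)\<^sup>2)"
    by (simp add: V_def)
qed

lemma nn_integral_ball_square_deviation:
  assumes B: "is_ball n B"
  shows "(\<integral>\<^sup>+x. indicator B x * ennreal ((\<phi> x - c)\<^sup>2) \<partial>RN n) = ennreal (LINT x:B|RN n. (\<phi> x - c)\<^sup>2)"
  using set_integral_ball_square_deviation(1)[OF B, of c]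
  unfolding set_lebesgue_integral_def set_integrable_def
  by (subst nn_integral_eq_integral[symmetric]) (auto intro!: nn_integral_cong split: split_indicator)

lemma ball_variance_nonneg:
  assumes B: "is_ball n B"
  shows "0 \<le> ball_variance B"
proof -
  have "0 \<le> (LINT x:B|RN n. (\<phi> x - avg n B \<phi>)\<^sup>2)"
    unfolding set_lebesgue_integral_def by (intro integral_nonneg_AE) auto
  then show ?thesis
    using measure_ball_pos[OF B]
    by (simp add: set_integral_ball_square_deviation(2)[OF B] zero_le_mult_iff)
qed

lemma sqrt_ball_variance_le_bmo_norm: "is_ball n B \<Longrightarrow> ereal (sqrt (ball_variance B)) \<le> bmo_norm n \<phi>"
  unfolding bmo_norm_def ball_variance_def by (rule SUP_upper) simp

lemma bmo_norm_eq: "bmo_norm n \<phi> = ereal bmo" and bmo_nonneg: "0 \<le> bmo"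
proof -
  have "is_ball n (eball n (\<lambda>i\<in>{..<n}. 0) 1)"
    by (rule is_ball_eball) (auto simp: space_RN space_lborel_PiM)
  then have "ereal 0 \<le> bmo_norm n \<phi>"
    using sqrt_ball_variance_le_bmo_norm ball_variance_nonneg by (meson order_trans ereal_less_eq(3) real_sqrt_ge_zero)
  moreover have "bmo_norm n \<phi> < \<infinity>"
    using in_BMO by (simp add: BMO_def)
  ultimately show "bmo_norm n \<phi> = ereal bmo" "0 \<le> bmo"
    unfolding bmo_def by (cases "bmo_norm n \<phi>"; simp)+
qed

lemma ball_variance_le:
  assumes B: "is_ball n B"
  shows "ball_variance B \<le> bmo\<^sup>2"
proof -
  have "sqrt (ball_variance B) \<le> bmo"
    using sqrt_ball_variance_le_bmo_norm[OF B] by (simp add: bmo_norm_eq)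
  then have "(sqrt (ball_variance B))\<^sup>2 \<le> bmo\<^sup>2"
    using ball_variance_nonneg[OF B] by (intro power_mono) auto
  then show ?thesis
    using ball_variance_nonneg[OF B] by simp
qed

lemma avg_diff_squared_le:
  assumes B: "is_ball n B" and B': "is_ball n B'" and "B \<subseteq> B'"
  shows "(avg n B \<phi> - avg n B' \<phi>)\<^sup>2 \<le> measure (RN n) B' / measure (RN n) B * bmo\<^sup>2"
proof -
  let ?c = "avg n B' \<phi>"
  have "measure (RN n) B * (avg n B \<phi> - ?c)\<^sup>2 \<le> measure (RN n) B * (ball_variance B + (avg n B \<phi> - ?c)\<^sup>2)"
    using ball_variance_nonneg[OF B] measure_ball_pos[OF B] by (intro mult_left_mono) auto
  also have "\<dots> = (LINT x:B|RN n. (\<phi> x - ?c)\<^sup>2)"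
    by (rule set_integral_ball_square_deviation(2)[OF B, symmetric])
  also have "\<dots> \<le> (LINT x:B'|RN n. (\<phi> x - ?c)\<^sup>2)"
    using set_integral_ball_square_deviation(1)[OF B, of ?c] set_integral_ball_square_deviation(1)[OF B', of ?c]
      \<open>B \<subseteq> B'\<close>
    unfolding set_lebesgue_integral_def set_integrable_def
    by (intro integral_mono) (auto split: split_indicator)
  also have "\<dots> = measure (RN n) B' * ball_variance B'"
    using set_integral_ball_square_deviation(2)[OF B', of ?c] by simp
  also have "\<dots> \<le> measure (RN n) B' * bmo\<^sup>2"
    using ball_variance_le[OF B'] measure_ball_pos[OF B'] by (intro mult_left_mono) auto
  finally show ?thesis
    using measure_ball_pos[OF B] by (simp add: field_simps)
qed

lemma ball_avg_diff_le_adjacent: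
  assumes y: "y \<in> space (RN n)" and r: "0 < r" and "r \<le> R" and R: "R \<le> (1 + 1 / real n) * r"
  shows "\<bar>ball_avg y r - ball_avg y R\<bar> \<le> 2 * bmo"
proof -
  have "(R / r) ^ n \<le> (1 + 1 / real n) ^ n"
    using r R \<open>r \<le> R\<close> by (intro power_mono) (auto simp: divide_le_eq mult.commute)
  also have "\<dots> \<le> 4"
    using one_plus_inverse_power_le_exp_1[of n] e_less_272 by simp
  finally have ratio: "(R / r) ^ n \<le> 4" .
  have "(ball_avg y r - ball_avg y R)\<^sup>2 \<le> measure (RN n) (eball n y R) / measure (RN n) (eball n y r) * bmo\<^sup>2"
    using r \<open>r \<le> R\<close> by (intro avg_diff_squared_le is_ball_eball y eball_mono) auto
  also have "measure (RN n) (eball n y R) / measure (RN n) (eball n y r) = (R / r) ^ n"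
    using r \<open>r \<le> R\<close> unit_ball_volume_pos[OF dim_ge_1] by (simp add: measure_eball power_divide)
  also have "(R / r) ^ n * bmo\<^sup>2 \<le> (2 * bmo)\<^sup>2"
    using ratio by (simp add: power2_eq_square mult_right_mono)
  finally show ?thesis
    using abs_le_square_iff[of "ball_avg y r - ball_avg y R" "2 * bmo"] bmo_nonneg by simp
qed

lemma ball_avg_diff_le_chain:
  assumes y: "y \<in> space (RN n)" and r: "0 < r"
  shows "r \<le> R \<Longrightarrow> R \<le> (1 + 1 / real n) ^ k * r \<Longrightarrow> \<bar>ball_avg y r - ball_avg y R\<bar> \<le> 2 * real k * bmo"
proof (induction k arbitrary: R)
  case (Suc k)
  define R' where "R' = (1 + 1 / real n) ^ k * r"
  show ?case
  proof (cases "R \<le> R'")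
    case True
    then have "\<bar>ball_avg y r - ball_avg y R\<bar> \<le> 2 * real k * bmo"
      using Suc.IH[OF Suc.prems(1)] by (simp add: R'_def)
    also have "\<dots> \<le> 2 * real (Suc k) * bmo"
      using bmo_nonneg by (intro mult_right_mono) auto
    finally show ?thesis .
  next
    case False
    have "r \<le> R'"
      using r by (simp add: R'_def one_le_power)
    then have "\<bar>ball_avg y r - ball_avg y R'\<bar> \<le> 2 * real k * bmo"
      by (rule Suc.IH) (simp add: R'_def)
    moreover have "\<bar>ball_avg y R' - ball_avg y R\<bar> \<le> 2 * bmo"
    proof (rule ball_avg_diff_le_adjacent[OF y])
      show "0 < R'" using r \<open>r \<le> R'\<close> by linarith
      show "R' \<le> R" using False by simp
      show "R \<le> (1 + 1 / real n) * R'" using Suc.prems(2) by (simp add: R'_def mult.assoc)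
    qed
    ultimately show ?thesis
      by (simp add: algebra_simps)
  qed
qed simp

lemma ball_avg_diff_le_log:
  assumes y: "y \<in> space (RN n)" and r: "0 < r" and R: "0 < R"
  shows "\<bar>ball_avg y r - ball_avg y R\<bar> \<le> 2 * bmo * (2 * real n * \<bar>ln (R / r)\<bar> + 1)"
proof -
  have ordered: "\<bar>ball_avg y r - ball_avg y R\<bar> \<le> 2 * bmo * (2 * real n * ln (R / r) + 1)"
    if r: "0 < r" and "r \<le> R" for r R
  proof -
    define L where "L = ln (R / r)"
    have "0 \<le> L" using r \<open>r \<le> R\<close> by (simp add: L_def)
    define k where "k = nat \<lceil>(real n + 1) * L\<rceil>"
    have k: "(real n + 1) * L \<le> real k" "real k \<le> (real n + 1) * L + 1"
      using \<open>0 \<le> L\<close> by (simp_all add: k_def)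
    have "R / r = exp L" using r \<open>r \<le> R\<close> by (simp add: L_def)
    also have "\<dots> \<le> exp (1 / (real n + 1)) ^ k"
      using k(1) by (simp add: exp_of_nat_mult[symmetric] field_simps)
    also have "\<dots> \<le> (1 + 1 / real n) ^ k"
      by (intro power_mono exp_inverse_Suc_le dim_ge_1) simp
    finally have "R \<le> (1 + 1 / real n) ^ k * r" using r by (simp add: divide_le_eq)
    then have "\<bar>ball_avg y r - ball_avg y R\<bar> \<le> 2 * real k * bmo"
      by (rule ball_avg_diff_le_chain[OF y r \<open>r \<le> R\<close>])
    also have "\<dots> \<le> 2 * bmo * ((real n + 1) * L + 1)"
      using mult_right_mono[OF k(2) bmo_nonneg] by (simp add: mult_ac)
    also have "\<dots> \<le> 2 * bmo * (2 * real n * L + 1)"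
      using dim_ge_1 \<open>0 \<le> L\<close> bmo_nonneg by (intro mult_left_mono add_right_mono mult_right_mono) auto
    finally show ?thesis by (simp add: L_def)
  qed
  show ?thesis
  proof (cases "r \<le> R")
    case True
    then show ?thesis using ordered[OF r True] r by simp
  next
    case False
    then have "\<bar>ball_avg y R - ball_avg y r\<bar> \<le> 2 * bmo * (2 * real n * ln (r / R) + 1)"
      using ordered[OF R] by simp
    moreover have "ln (r / R) = \<bar>ln (R / r)\<bar>"
      using False r R by (simp add: ln_div)
    ultimately show ?thesis by (simp add: abs_minus_commute)
  qed
qed

lemma set_integral_eball_deviation_le:
  assumes y: "y \<in> space (RN n)" and r: "0 < r" and r0: "0 < r0"
  shows "(LINT x:eball n y r|RN n. (\<phi> x - ball_avg y r0)\<^sup>2)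
      \<le> measure (RN n) (eball n y r) * (bmo\<^sup>2 * (9 + 32 * (real n)\<^sup>2 * (ln (r / r0))\<^sup>2))"
proof -
  define L where "L = \<bar>ln (r0 / r)\<bar>"
  have L: "L\<^sup>2 = (ln (r / r0))\<^sup>2"
    using r r0 by (simp add: L_def ln_div power2_commute)
  have "\<bar>ball_avg y r - ball_avg y r0\<bar> \<le> 2 * bmo * (2 * real n * L + 1)"
    unfolding L_def by (rule ball_avg_diff_le_log[OF y r r0])
  then have "(ball_avg y r - ball_avg y r0)\<^sup>2 \<le> (2 * bmo * (2 * real n * L + 1))\<^sup>2"
    using bmo_nonneg by (simp add: abs_le_square_iff[symmetric])
  also have "\<dots> = 4 * bmo\<^sup>2 * (2 * real n * L + 1)\<^sup>2"
    by (simp add: power_mult_distrib)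
  also have "\<dots> \<le> 4 * bmo\<^sup>2 * (8 * (real n)\<^sup>2 * L\<^sup>2 + 2)"
  proof (rule mult_left_mono)
    show "(2 * real n * L + 1)\<^sup>2 \<le> 8 * (real n)\<^sup>2 * L\<^sup>2 + 2"
      using sum_squares_bound[of "2 * real n * L" 1] by (simp add: power2_eq_square algebra_simps)
  qed simp
  finally have "ball_variance (eball n y r) + (ball_avg y r - ball_avg y r0)\<^sup>2
      \<le> bmo\<^sup>2 * (9 + 32 * (real n)\<^sup>2 * (ln (r / r0))\<^sup>2)"
    using ball_variance_le[OF is_ball_eball[OF y r]] unfolding L[symmetric] by (simp add: algebra_simps)
  then show ?thesis
    using measure_ball_pos[OF is_ball_eball[OF y r]]
    by (simp add: set_integral_ball_square_deviation(2)[OF is_ball_eball[OF y r]])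
qed

end

section \<open>Variance of the heat extension\<close>

lemma integrable_mult_of_integrable_mult_square:
  fixes h g :: "'a \<Rightarrow> real"
  assumes h: "integrable M h" and hg2: "integrable M (\<lambda>x. h x * (g x)\<^sup>2)"
    and h_nonneg: "\<And>x. 0 \<le> h x" and [measurable]: "g \<in> borel_measurable M"
  shows "integrable M (\<lambda>x. h x * g x)"
proof (rule Bochner_Integration.integrable_bound[OF Bochner_Integration.integrable_add[OF h hg2]])
  have [measurable]: "h \<in> borel_measurable M"
    using h by (rule borel_measurable_integrable)
  show "(\<lambda>x. h x * g x) \<in> borel_measurable M"
    by measurable
  have "\<bar>z\<bar> \<le> 1 + z\<^sup>2" for z :: real
  proof (cases "\<bar>z\<bar> \<le> 1")
    case False
    then have "\<bar>z\<bar> * 1 \<le> \<bar>z\<bar> * \<bar>z\<bar>"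
      by (intro mult_left_mono) auto
    then show ?thesis by (simp add: power2_eq_square)
  qed (simp add: add_increasing2)
  then have "h x * \<bar>g x\<bar> \<le> h x * (1 + (g x)\<^sup>2)" for x
    using h_nonneg by (intro mult_left_mono) auto
  then show "AE x in M. norm (h x * g x) \<le> norm (h x + h x * (g x)\<^sup>2)"
    using h_nonneg by (auto simp: abs_mult distrib_left)
qed

lemma variance_le_of_nn_integral_square_deviation:
  fixes h f :: "'a \<Rightarrow> real"
  assumes [measurable]: "h \<in> borel_measurable M" "f \<in> borel_measurable M"
    and h_nonneg: "\<And>x. 0 \<le> h x" and h_total: "(\<integral>\<^sup>+x. ennreal (h x) \<partial>M) = 1"
    and deviation: "(\<integral>\<^sup>+x. ennreal (h x * (f x - c)\<^sup>2) \<partial>M) \<le> ennreal B" and "0 \<le> B"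
  shows "(\<integral>x. h x * (f x)\<^sup>2 \<partial>M) - (\<integral>x. h x * f x \<partial>M)\<^sup>2 \<le> B"
proof -
  define g where "g x = h x * (f x - c)\<^sup>2" for x
  define d where "d x = h x * (f x - c)" for x
  have [measurable]: "g \<in> borel_measurable M" "d \<in> borel_measurable M"
    unfolding g_def d_def by measurable
  have "has_bochner_integral M h 1"
    using h_total h_nonneg by (intro has_bochner_integral_nn_integral) auto
  then have h_int: "integrable M h" and h_integral: "(\<integral>x. h x \<partial>M) = 1"
    by (simp_all add: has_bochner_integral_iff)
  have g_int: "integrable M g"
  proof (rule integrableI_bounded)
    show "(\<integral>\<^sup>+x. ennreal (norm (g x)) \<partial>M) < \<infinity>"
      using deviation h_nonneg by (simp add: g_def le_less_trans[of _ "ennreal B"])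
  qed measurable
  have "ennreal (\<integral>x. g x \<partial>M) \<le> ennreal B"
    using deviation h_nonneg by (subst nn_integral_eq_integral[OF g_int, symmetric]) (auto simp: g_def)
  then have g_le: "(\<integral>x. g x \<partial>M) \<le> B"
    using \<open>0 \<le> B\<close> by simp
  have d_int: "integrable M d"
    unfolding d_def by (rule integrable_mult_of_integrable_mult_square[OF h_int g_int[unfolded g_def] h_nonneg]) measurable
  have first: "(\<integral>x. h x * f x \<partial>M) = (\<integral>x. d x \<partial>M) + c"
  proof -
    have "(\<integral>x. h x * f x \<partial>M) = (\<integral>x. d x + c * h x \<partial>M)"
      by (intro Bochner_Integration.integral_cong) (auto simp: d_def algebra_simps)
    then show ?thesis
      using d_int h_int h_integral by simp
  qed
  have second: "(\<integral>x. h x * (f x)\<^sup>2 \<partial>M) = (\<integral>x. g x \<partial>M) + 2 * c * (\<integral>x. d x \<partial>M) + c\<^sup>2"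
  proof -
    have "(\<integral>x. h x * (f x)\<^sup>2 \<partial>M) = (\<integral>x. g x + 2 * c * d x + c\<^sup>2 * h x \<partial>M)"
      by (intro Bochner_Integration.integral_cong) (auto simp: g_def d_def power2_eq_square algebra_simps)
    then show ?thesis
      using g_int d_int h_int h_integral by simp
  qed
  have "(\<integral>x. h x * (f x)\<^sup>2 \<partial>M) - (\<integral>x. h x * f x \<partial>M)\<^sup>2 = (\<integral>x. g x \<partial>M) - (\<integral>x. d x \<partial>M)\<^sup>2"
    unfolding first second by (simp add: power2_eq_square algebra_simps)
  also have "\<dots> \<le> B"
    using g_le zero_le_power2[of "\<integral>x. d x \<partial>M"] by linarith
  finally show ?thesis .
qed

context bmo_function
begin

lemma heat_radial_weight_times_ball_deviation_le:
  assumes y: "y \<in> space (RN n)" and t: "t > 0" and r0: "0 < r0"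
  shows "ennreal (heat_radial_weight n t r)
      * (\<integral>\<^sup>+x. indicator (eball n y r) x * ennreal ((\<phi> x - ball_avg y r0)\<^sup>2) \<partial>RN n)
    \<le> ennreal (heat_radius_density n t r * (9 * bmo\<^sup>2 + 32 * (real n)\<^sup>2 * bmo\<^sup>2 * (ln (r / r0))\<^sup>2))
      * indicator {0..} r"
proof (cases "0 < r")
  case True
  have "(\<integral>\<^sup>+x. indicator (eball n y r) x * ennreal ((\<phi> x - ball_avg y r0)\<^sup>2) \<partial>RN n)
      = ennreal (LINT x:eball n y r|RN n. (\<phi> x - ball_avg y r0)\<^sup>2)"
    by (rule nn_integral_ball_square_deviation[OF is_ball_eball[OF y True]])
  also have "\<dots> \<le> ennreal (unit_ball_volume n * r ^ n * (bmo\<^sup>2 * (9 + 32 * (real n)\<^sup>2 * (ln (r / r0))\<^sup>2)))"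
    using set_integral_eball_deviation_le[OF y True r0] True
    by (intro ennreal_leI) (simp add: measure_eball)
  finally have "ennreal (heat_radial_weight n t r)
      * (\<integral>\<^sup>+x. indicator (eball n y r) x * ennreal ((\<phi> x - ball_avg y r0)\<^sup>2) \<partial>RN n)
    \<le> ennreal (heat_radial_weight n t r)
      * ennreal (unit_ball_volume n * r ^ n * (bmo\<^sup>2 * (9 + 32 * (real n)\<^sup>2 * (ln (r / r0))\<^sup>2)))"
    by (rule mult_left_mono) simp
  also have "\<dots> = ennreal (heat_radius_density n t r * (9 * bmo\<^sup>2 + 32 * (real n)\<^sup>2 * bmo\<^sup>2 * (ln (r / r0))\<^sup>2))"
    using heat_radial_weight_nonneg[OF t, of r] True
    by (subst ennreal_mult'[symmetric]) (auto simp: heat_radius_density_def algebra_simps)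
  finally show ?thesis
    using True by simp
qed (simp add: eball_nonpos)

lemma nn_integral_heat_kernel_square_deviation_le:
  assumes y: "y \<in> space (RN n)" and t: "t > 0"
  defines "r0 \<equiv> sqrt (2 * t * (real n + 2))"
  shows "(\<integral>\<^sup>+x. ennreal (heat_kernel n t (\<lambda>i. y i - x i) * (\<phi> x - ball_avg y r0)\<^sup>2) \<partial>RN n)
      \<le> ennreal (bmo\<^sup>2 * (9 + 16 * real n))"
proof -
  have r0: "0 < r0" using t by (simp add: r0_def)
  have "(\<integral>\<^sup>+x. ennreal (heat_kernel n t (\<lambda>i. y i - x i) * (\<phi> x - ball_avg y r0)\<^sup>2) \<partial>RN n)
      = (\<integral>\<^sup>+x. ennreal (heat_kernel n t (\<lambda>i. y i - x i)) * ennreal ((\<phi> x - ball_avg y r0)\<^sup>2) \<partial>RN n)"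
    using t by (intro nn_integral_cong) (simp add: ennreal_mult heat_kernel_nonneg)
  also have "\<dots> = (\<integral>\<^sup>+r. ennreal (heat_radial_weight n t r)
      * (\<integral>\<^sup>+x. indicator (eball n y r) x * ennreal ((\<phi> x - ball_avg y r0)\<^sup>2) \<partial>RN n) \<partial>lborel)"
    by (rule nn_integral_heat_kernel_eball[OF t]) measurable
  also have "\<dots> \<le> (\<integral>\<^sup>+r. ennreal (heat_radius_density n t r
      * (9 * bmo\<^sup>2 + 32 * (real n)\<^sup>2 * bmo\<^sup>2 * (ln (r / r0))\<^sup>2)) * indicator {0..} r \<partial>lborel)"
    by (intro nn_integral_mono heat_radial_weight_times_ball_deviation_le y t r0)
  also have "\<dots> \<le> ennreal (9 * bmo\<^sup>2 + 32 * (real n)\<^sup>2 * bmo\<^sup>2 / (2 * real n))"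
    unfolding r0_def
    by (rule nn_integral_heat_radius_density_log_affine_le[OF dim_ge_1 t]) simp_all
  also have "9 * bmo\<^sup>2 + 32 * (real n)\<^sup>2 * bmo\<^sup>2 / (2 * real n) = bmo\<^sup>2 * (9 + 16 * real n)"
    using dim_ge_1 by (simp add: field_simps power2_eq_square)
  finally show ?thesis .
qed

lemma heat_variance_le:
  assumes y: "y \<in> space (RN n)" and t: "t > 0"
  shows "heat_ext n (\<lambda>x. (\<phi> x)\<^sup>2) y t - (heat_ext n \<phi> y t)\<^sup>2 \<le> bmo\<^sup>2 * (9 + 16 * real n)"
  unfolding heat_ext_def
proof (rule variance_le_of_nn_integral_square_deviation)
  show "(\<lambda>x. heat_kernel n t (\<lambda>i. y i - x i)) \<in> borel_measurable (RN n)"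
    by (intro measurable_RN borel_measurable_heat_kernel)
  show "(\<integral>\<^sup>+x. ennreal (heat_kernel n t (\<lambda>i. y i - x i)) \<partial>RN n) = 1"
    using nn_integral_heat_kernel[OF t] by (simp add: nn_integral_RN)
qed (use nn_integral_heat_kernel_square_deviation_le[OF y t] t in \<open>auto simp: heat_kernel_nonneg\<close>)

lemma sqrt_heat_variance_le:
  assumes y: "y \<in> space (RN n)" and t: "t > 0"
  shows "sqrt (heat_ext n (\<lambda>x. (\<phi> x)\<^sup>2) y t - (heat_ext n \<phi> y t)\<^sup>2) \<le> 5 * sqrt (real n) * bmo"
proof -
  have "heat_ext n (\<lambda>x. (\<phi> x)\<^sup>2) y t - (heat_ext n \<phi> y t)\<^sup>2 \<le> bmo\<^sup>2 * (25 * real n)"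
    using heat_variance_le[OF y t] mult_left_mono[of "9 + 16 * real n" "25 * real n" "bmo\<^sup>2"] dim_ge_1
    by simp
  also have "\<dots> = (5 * sqrt (real n) * bmo)\<^sup>2"
    by (simp add: power_mult_distrib)
  finally have "sqrt (heat_ext n (\<lambda>x. (\<phi> x)\<^sup>2) y t - (heat_ext n \<phi> y t)\<^sup>2) \<le> sqrt ((5 * sqrt (real n) * bmo)\<^sup>2)"
    by (rule real_sqrt_le_mono)
  then show ?thesis
    using bmo_nonneg by simp
qed

end

theorem proposition4p1:
  shows "\<exists>C::real. \<forall>n::nat. \<forall>\<phi>. n \<ge> 1 \<longrightarrow> \<phi> \<in> BMO n \<longrightarrow>
           H_norm n \<phi> \<le> ereal (C * sqrt (real n)) * bmo_norm n \<phi>"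
proof (intro exI[of _ 5] allI impI)
  fix n :: nat and \<phi> :: "(nat \<Rightarrow> real) \<Rightarrow> real"
  assume "n \<ge> 1" and "\<phi> \<in> BMO n"
  then interpret bmo_function n \<phi>
    by unfold_locales
  show "H_norm n \<phi> \<le> ereal (5 * sqrt (real n)) * bmo_norm n \<phi>"
    unfolding H_norm_def bmo_norm_eq
    by (rule SUP_least) (auto simp: sqrt_heat_variance_le)
qed

end
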